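(* (1) For every model $\mathfrak M$: $\mathfrak M\in\mathcal D_{P-}$ iff every sequent $(\{p\},((\bot\to\bot)\to\bot)\to p)$, $p\in P0$, is valid in $\mathfrak M$. (2) For every model $\mathfrak M$ with symmetric relation: $\mathfrak M$ is an interpretation iff every sequent $(\{p\},((p\to\bot)\to\bot)\to p)$, $p\in P0$, is valid in $\mathfrak M$. (3) For every model $\mathfrak M$ with transitive relation: $\mathfrak M$ is an interpretation iff every sequent $(\{p\},(\bot\to\bot)\to p)$, $p\in P0$, is valid in $\mathfrak M$.
   Context: Fix a countable set $P0$ of propositional variables; $Form$: $\varphi::=p\mid\bot\mid(\varphi\wedge\varphi)\mid(\varphi\to\varphi)$. A model is $\mathfrak M=(W,R,V)$ with $W\neq\emptyset$, $R\subseteq W\times W$, $V:P0\to\wp(W)$. Satisfaction: $\bot$ never true; $p$ true at $s$ iff $s\in V(p)$; $\wedge$ pointwise; $\mathfrak M,s\models\varphi\to\psi$ iff for all $t$ with $sRt$, $\mathfrak M,t\models\varphi$ implies $\mathfrak M,t\models\psi$. A sequent $(\Gamma,\varphi)$ ($\Gamma\subseteq Form$) is valid in $\mathfrak M$ iff for every $s\in W$, if $s$ satisfies all members of $\Gamma$ then $s$ satisfies $\varphi$. For $X\subseteq W$: $-X=W\setminus X$, $R[X]=\{t:\exists s\in X,\ sRt\}$, $R^\Box(X)=\{s:\forall t\,(sRt\Rightarrow t\in X)\}$. A proposition of $(W,R)$ is $X\subseteq W$ with $R[X]\cap R^\Box(R[X])\subseteq X$; an interpretation is a model with $V(p)$ a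 proposition for every $p$. $\mathcal D_{P-}$ is the class of models $(W,R,V)$ such that $V(p)\subseteq R^\Box(-R^\Box(\emptyset)\cup V(p))$ for all $p\in P0$. *)

theory Defs
  imports Main "HOL-Library.Countable"
begin

datatype 'p form = Var 'p | Bot | Conj "'p form" "'p form" | Imp "'p form" "'p form"

record ('s, 'p) model =
  W :: "'s set"
  R :: "('s \<times> 's) set"
  V :: "'p \<Rightarrow> 's set"

definition is_model :: "('s, 'p) model \<Rightarrow> bool" where
  "is_model M \<longleftrightarrow> W M \<noteq> {} \<and> R M \<subseteq> W M \<times> W M \<and> (\<forall>p. V M p \<subseteq> W M)"

fun sat :: "('s, 'p) model \<Rightarrow> 's \<Rightarrow> 'p form \<Rightarrow> bool" where
  "sat M s (Var p) \<longleftrightarrow> s \<in> V M p"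
| "sat M s Bot \<longleftrightarrow> False"
| "sat M s (Conj a b) \<longleftrightarrow> sat M s a \<and> sat M s b"
| "sat M s (Imp a b) \<longleftrightarrow> (\<forall>t. (s, t) \<in> R M \<longrightarrow> sat M t a \<longrightarrow> sat M t b)"

definition valid_seq :: "('s, 'p) model \<Rightarrow> 'p form set \<Rightarrow> 'p form \<Rightarrow> bool" where
  "valid_seq M \<Gamma> \<phi> \<longleftrightarrow> (\<forall>s \<in> W M. (\<forall>\<psi> \<in> \<Gamma>. sat M s \<psi>) \<longrightarrow> sat M s \<phi>)"

definition compl :: "'s set \<Rightarrow> 's set \<Rightarrow> 's set" where
  "compl Wd X = Wd - X"

definition img :: "('s \<times> 's) set \<Rightarrow> 's set \<Rightarrow> 's set" where
  "img Rel X = {t. \<exists>s \<in> X. (s, t) \<in> Rel}"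

definition box :: "'s set \<Rightarrow> ('s \<times> 's) set \<Rightarrow> 's set \<Rightarrow> 's set" where
  "box Wd Rel X = {s \<in> Wd. \<forall>t. (s, t) \<in> Rel \<longrightarrow> t \<in> X}"

definition is_proposition :: "'s set \<Rightarrow> ('s \<times> 's) set \<Rightarrow> 's set \<Rightarrow> bool" where
  "is_proposition Wd Rel X \<longleftrightarrow> X \<subseteq> Wd \<and> img Rel X \<inter> box Wd Rel (img Rel X) \<subseteq> X"

definition is_interpretation :: "('s, 'p) model \<Rightarrow> bool" where
  "is_interpretation M \<longleftrightarrow> (\<forall>p. is_proposition (W M) (R M) (V M p))"

definition in_DPminus :: "('s, 'p) model \<Rightarrow> bool" where
  "in_DPminus M \<longleftrightarrow>
     (\<forall>p. V M p \<subseteq> box (W M) (R M) (compl (W M) (box (W M) (R M) {}) \<union> V M p))"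

end

theory Submission
  imports Defs
begin

text \<open>All three sequents have premise \<open>p\<close>, so validity only constrains the worlds of \<open>V p\<close>.
  The formula \<open>\<bottom> \<rightarrow> \<bottom>\<close> holds everywhere, hence \<open>(\<bottom> \<rightarrow> \<bottom>) \<rightarrow> \<bottom>\<close> holds exactly at dead ends and
  \<open>(\<bottom> \<rightarrow> \<bottom>) \<rightarrow> p\<close> says that every successor is in \<open>V p\<close>. Thus (1) says that \<open>V p\<close> is closed
  under successors that are dead ends, which is the defining condition of \<open>D\<^sub>P\<^sub>-\<close>; (3) says that \<open>V p\<close> is
  closed under successors, which for a transitive relation is the proposition condition, since
  then \<open>R[X] \<subseteq> R\<^sup>\<box>(R[X])\<close>. For a symmetric relation \<open>(p \<rightarrow> \<bottom>) \<rightarrow> \<bottom>\<close> holds at \<open>t\<close> iff every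
  successor of \<open>t\<close> lies in \<open>R[V p]\<close>, i.e. iff \<open>t \<in> R\<^sup>\<box>(R[V p])\<close>, which turns (2) into the
  proposition condition.\<close>

lemma valid_seq_Var_iff:
  assumes "V M p \<subseteq> W M"
  shows "valid_seq M {Var p} \<phi> \<longleftrightarrow> (\<forall>s \<in> V M p. sat M s \<phi>)"
  using assms unfolding valid_seq_def by auto

lemma sat_not_not_Var_iff_sym:
  assumes "sym (R M)" and "t \<in> W M"
  shows "sat M t (Imp (Imp (Var p) Bot) Bot) \<longleftrightarrow> t \<in> box (W M) (R M) (img (R M) (V M p))"
  using assms unfolding box_def img_def sym_def by simp blast

lemma is_proposition_iff:
  "is_proposition Wd Rel X \<longleftrightarrow>
     X \<subseteq> Wd \<and> (\<forall>s \<in> X. \<forall>t. (s, t) \<in> Rel \<longrightarrow> t \<in> box Wd Rel (img Rel X) \<longrightarrow> t \<in> X)"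
  unfolding is_proposition_def img_def by blast

lemma is_proposition_iff_trans:
  assumes "trans Rel" and "Rel \<subseteq> Wd \<times> Wd"
  shows "is_proposition Wd Rel X \<longleftrightarrow> X \<subseteq> Wd \<and> img Rel X \<subseteq> X"
proof -
  have "img Rel X \<subseteq> box Wd Rel (img Rel X)"
    using assms unfolding img_def box_def trans_def by blast
  then show ?thesis
    unfolding is_proposition_def by blast
qed

lemma in_DPminus_iff:
  assumes "is_model M"
  shows "in_DPminus M \<longleftrightarrow>
           (\<forall>p. \<forall>s \<in> V M p. \<forall>t. (s, t) \<in> R M \<longrightarrow> (\<forall>u. (t, u) \<notin> R M) \<longrightarrow> t \<in> V M p)"
  using assms unfolding in_DPminus_def is_model_def box_def compl_def by blast

theorem in_DPminus_iff_valid: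
  assumes "is_model M"
  shows "in_DPminus M \<longleftrightarrow> (\<forall>p. valid_seq M {Var p} (Imp (Imp (Imp Bot Bot) Bot) (Var p)))"
proof -
  have "V M p \<subseteq> W M" for p
    using assms unfolding is_model_def by blast
  then show ?thesis
    by (simp add: in_DPminus_iff[OF assms] valid_seq_Var_iff)
qed

theorem is_interpretation_iff_valid_sym:
  assumes "is_model M" and "sym (R M)"
  shows "is_interpretation M \<longleftrightarrow>
           (\<forall>p. valid_seq M {Var p} (Imp (Imp (Imp (Var p) Bot) Bot) (Var p)))"
proof -
  have "is_proposition (W M) (R M) (V M p) \<longleftrightarrow>
          valid_seq M {Var p} (Imp (Imp (Imp (Var p) Bot) Bot) (Var p))" for p
  proof -
    have VW: "V M p \<subseteq> W M" and RW: "R M \<subseteq> W M \<times> W M"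
      using assms(1) unfolding is_model_def by blast+
    have "sat M t (Imp (Imp (Var p) Bot) Bot) \<longleftrightarrow> t \<in> box (W M) (R M) (img (R M) (V M p))"
      if "(s, t) \<in> R M" for s t
      using sat_not_not_Var_iff_sym[OF assms(2)] that RW by blast
    then show ?thesis
      by (auto simp: is_proposition_iff valid_seq_Var_iff[OF VW] VW)
  qed
  then show ?thesis
    unfolding is_interpretation_def by blast
qed

theorem is_interpretation_iff_valid_trans:
  assumes "is_model M" and "trans (R M)"
  shows "is_interpretation M \<longleftrightarrow> (\<forall>p. valid_seq M {Var p} (Imp (Imp Bot Bot) (Var p)))"
proof -
  have VW: "V M p \<subseteq> W M" for p
    using assms(1) unfolding is_model_def by blast
  have RW: "R M \<subseteq> W M \<times> W M"
    using assms(1) unfolding is_model_def by blast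
  show ?thesis
    unfolding is_interpretation_def is_proposition_iff_trans[OF assms(2) RW]
    by (auto simp: valid_seq_Var_iff[OF VW] VW img_def)
qed

theorem mainTheorem4:
  fixes M :: "('s, 'p :: countable) model"
  assumes "is_model M"
  shows "(in_DPminus M \<longleftrightarrow>
            (\<forall>p. valid_seq M {Var p} (Imp (Imp (Imp Bot Bot) Bot) (Var p))))
       \<and> (sym (R M) \<longrightarrow> (is_interpretation M \<longleftrightarrow>
            (\<forall>p. valid_seq M {Var p} (Imp (Imp (Imp (Var p) Bot) Bot) (Var p)))))
       \<and> (trans (R M) \<longrightarrow> (is_interpretation M \<longleftrightarrow>
            (\<forall>p. valid_seq M {Var p} (Imp (Imp Bot Bot) (Var p)))))"
  using in_DPminus_iff_valid is_interpretation_iff_valid_sym is_interpretation_iff_valid_trans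
    assms by blast

end
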